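(* Let $G$ and $H$ be finite simple graphs, neither complete, and not both equal to a disjoint union of two complete graphs. Then $d_{G\diamond H}((g,h),(g',h'))=3$ if and only if at least one of the following holds: (1) $N_G[g]=N_G[g']$, $d_H(h,h')\ge 3$, and ($N_G[g]=V(G)$ or $\{h,h'\}$ is a $\gamma_H$-pair); (2) $N_H[h]=N_H[h']$, $d_G(g,g')\ge 3$, and ($N_H[h]=V(H)$ or $\{g,g'\}$ is a $\gamma_G$-pair).
   Context: The modular product $G\diamond H$ has vertex set $V(G)\times V(H)$; distinct vertices $(g,h)$ and $(g',h')$ are adjacent iff ($g=g'$ and $hh'\in E(H)$), or ($gg'\in E(G)$ and $h=h'$), or ($gg'\in E(G)$ and $hh'\in E(H)$), or ($g\neq g'$, $h\neq h'$, $gg'\notin E(G)$ and $hh'\notin E(H)$). $N_X[v]$ is the closed neighborhood; distances may be $\infty$ (written $\ge 3$ includes $\infty$). A $\gamma_G$-pair is a set $\{g,g'\}$ of two distinct vertices of $G$ such that $N_G[g]\cap N_G[g']=\emptyset$ and $N_G[g]\cup N_G[g']=V(G)$. *)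

theory Defs
  imports Main "HOL-Library.Extended_Nat"
begin

record 'a sgraph =
  verts :: "'a set"
  adj :: "'a \<Rightarrow> 'a \<Rightarrow> bool"

definition finite_simple_graph :: "'a sgraph \<Rightarrow> bool" where
  "finite_simple_graph G \<longleftrightarrow> finite (verts G)
     \<and> (\<forall>x y. adj G x y \<longrightarrow> x \<in> verts G \<and> y \<in> verts G)
     \<and> (\<forall>x y. adj G x y \<longrightarrow> adj G y x)
     \<and> (\<forall>x. \<not> adj G x x)"

definition complete_graph :: "'a sgraph \<Rightarrow> bool" where
  "complete_graph G \<longleftrightarrow> (\<forall>x\<in>verts G. \<forall>y\<in>verts G. x \<noteq> y \<longrightarrow> adj G x y)"

definition two_complete_union :: "'a sgraph \<Rightarrow> bool" where
  "two_complete_union G \<longleftrightarrow> (\<exists>A B. A \<noteq> {} \<and> B \<noteq> {} \<and> A \<inter> B = {} \<and> A \<union> B = verts G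
     \<and> (\<forall>x\<in>verts G. \<forall>y\<in>verts G. adj G x y \<longleftrightarrow> x \<noteq> y \<and> ((x \<in> A \<and> y \<in> A) \<or> (x \<in> B \<and> y \<in> B))))"

definition closed_nbhd :: "'a sgraph \<Rightarrow> 'a \<Rightarrow> 'a set" where
  "closed_nbhd G v = {u \<in> verts G. u = v \<or> adj G v u}"

definition gdist :: "'a sgraph \<Rightarrow> 'a \<Rightarrow> 'a \<Rightarrow> enat" where
  "gdist G x y = (if \<exists>n. ((adj G) ^^ n) x y then enat (LEAST n. ((adj G) ^^ n) x y) else \<infinity>)"

definition gamma_pair :: "'a sgraph \<Rightarrow> 'a \<Rightarrow> 'a \<Rightarrow> bool" where
  "gamma_pair G g g' \<longleftrightarrow> g \<in> verts G \<and> g' \<in> verts G \<and> g \<noteq> g'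
     \<and> closed_nbhd G g \<inter> closed_nbhd G g' = {}
     \<and> closed_nbhd G g \<union> closed_nbhd G g' = verts G"

definition modular_product :: "'a sgraph \<Rightarrow> 'b sgraph \<Rightarrow> ('a \<times> 'b) sgraph" where
  "modular_product G H = \<lparr> verts = verts G \<times> verts H,
     adj = (\<lambda>(g,h) (g',h'). (g,h) \<in> verts G \<times> verts H \<and> (g',h') \<in> verts G \<times> verts H
        \<and> (g,h) \<noteq> (g',h') \<and>
        ((g = g' \<and> adj H h h') \<or> (adj G g g' \<and> h = h') \<or> (adj G g g' \<and> adj H h h')
         \<or> (g \<noteq> g' \<and> h \<noteq> h' \<and> \<not> adj G g g' \<and> \<not> adj H h h'))) \<rparr>"

end

theory Submission
  imports Defs
begin

text \<open>
  Distinct vertices (g, h) and (x, y) of the modular product are adjacent exactly when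
  x \<in> N_G[g] \<longleftrightarrow> y \<in> N_H[h]. If (g, h) and (g', h') are at distance at least 3, then
  g' \<in> N_G[g] or h' \<in> N_H[h], say the former; the candidate common neighbours (x, h),
  (x, h'), (g, y) and (x, y) then force condition (1), and conversely (1) leaves no common
  neighbour. For the upper bound, step from (g, h) to a neighbour that satisfies neither
  condition towards (g', h'); it is at distance at most 2. Such a neighbour exists unless
  N_G[g], N_H[h] and N_H[h'] are all complete components. In that case N_G[g] \<noteq> V(G)
  as G is not complete, so {h, h'} is a \<gamma>_H-pair and H is a disjoint union of two cliques;
  hence G is not, which yields a \<notin> N_G[g] with {a, g'} not a \<gamma>_G-pair, and (a, h') is
  the required neighbour.
\<close>

section \<open>Closed neighbourhoods and distances\<close>

lemma finite_simple_graphD: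
  assumes "finite_simple_graph G"
  shows "adj G x y \<Longrightarrow> x \<in> verts G" and "adj G x y \<Longrightarrow> y \<in> verts G"
    and "adj G x y \<Longrightarrow> adj G y x" and "\<not> adj G x x"
  using assms by (auto simp: finite_simple_graph_def)

lemma mem_closed_nbhd_iff: "x \<in> closed_nbhd G v \<longleftrightarrow> x \<in> verts G \<and> (x = v \<or> adj G v x)"
  by (simp add: closed_nbhd_def)

lemma closed_nbhd_self: "v \<in> verts G \<Longrightarrow> v \<in> closed_nbhd G v"
  by (simp add: closed_nbhd_def)

lemma closed_nbhd_subset: "closed_nbhd G v \<subseteq> verts G"
  by (auto simp: closed_nbhd_def)

lemma closed_nbhd_commute:
  assumes "finite_simple_graph G"
  shows "x \<in> closed_nbhd G y \<longleftrightarrow> y \<in> closed_nbhd G x"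
  using finite_simple_graphD[OF assms] by (auto simp: mem_closed_nbhd_iff)

lemma gamma_pair_commute: "gamma_pair G a b \<longleftrightarrow> gamma_pair G b a"
  unfolding gamma_pair_def by blast

lemma gamma_pair_closed_nbhd: "gamma_pair G a b \<Longrightarrow> closed_nbhd G a = verts G - closed_nbhd G b"
  unfolding gamma_pair_def using closed_nbhd_subset by blast

lemma gdist_le_enat_iff: "gdist G x y \<le> enat k \<longleftrightarrow> (\<exists>n\<le>k. (adj G ^^ n) x y)"
proof (cases "\<exists>n. (adj G ^^ n) x y")
  case True
  then have "gdist G x y = enat (LEAST n. (adj G ^^ n) x y)"
    by (simp add: gdist_def)
  moreover have "(LEAST n. (adj G ^^ n) x y) \<le> k \<longleftrightarrow> (\<exists>n\<le>k. (adj G ^^ n) x y)"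
    using True by (meson LeastI_ex Least_le le_trans)
  ultimately show ?thesis by simp
next
  case False
  then show ?thesis by (simp add: gdist_def)
qed

lemma ex_le_2_nat_iff: "(\<exists>n\<le>2. P n) \<longleftrightarrow> P 0 \<or> P 1 \<or> P (2::nat)"
  by (auto simp: le_Suc_eq numeral_2_eq_2)

lemma gdist_ge_3_iff:
  "3 \<le> gdist G x y \<longleftrightarrow> x \<noteq> y \<and> \<not> adj G x y \<and> \<not> (\<exists>z. adj G x z \<and> adj G z y)"
proof -
  have "3 \<le> gdist G x y \<longleftrightarrow> \<not> gdist G x y \<le> enat 2"
    by (cases "gdist G x y") (auto simp: numeral_eq_enat)
  also have "\<dots> \<longleftrightarrow> \<not> ((adj G ^^ 0) x y \<or> (adj G ^^ 1) x y \<or> (adj G ^^ 2) x y)"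
    by (simp only: gdist_le_enat_iff ex_le_2_nat_iff)
  finally show ?thesis by (simp add: numeral_2_eq_2 relcompp_apply)
qed

lemma gdist_le_Suc_if_adj:
  "adj G x y \<Longrightarrow> gdist G y z \<le> enat k \<Longrightarrow> gdist G x z \<le> enat (Suc k)"
  unfolding gdist_le_enat_iff by (blast intro: relpowp_Suc_I2)

lemma relpowp_symmetric:
  assumes "\<And>x y. R x y \<Longrightarrow> R y x" and "(R ^^ n) x y"
  shows "(R ^^ n) y x"
  using assms(2)
proof (induction n arbitrary: y)
  case (Suc n)
  then obtain z where "(R ^^ n) x z" and "R z y" by auto
  then show ?case using Suc.IH assms(1) by (blast intro: relpowp_Suc_I2)
qed simp

lemma gdist_commute:
  assumes "\<And>x y. adj G x y \<Longrightarrow> adj G y x"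
  shows "gdist G x y = gdist G y x"
proof -
  have "(adj G ^^ n) x y \<longleftrightarrow> (adj G ^^ n) y x" for n
    using relpowp_symmetric[of "adj G", OF assms] by blast
  then show ?thesis by (simp add: gdist_def)
qed

lemma closed_nbhd_disjoint_if_gdist_ge_3:
  assumes "finite_simple_graph G" and "3 \<le> gdist G x y"
  shows "closed_nbhd G x \<inter> closed_nbhd G y = {}"
proof -
  have "x \<noteq> y" and "\<not> adj G x y" and "\<And>z. adj G x z \<Longrightarrow> \<not> adj G z y"
    using assms(2) by (auto simp: gdist_ge_3_iff)
  then show ?thesis
    using finite_simple_graphD(3)[OF assms(1)] by (auto simp: mem_closed_nbhd_iff) metis
qed

section \<open>Adjacency in the modular product\<close>

lemma adj_modular_product_iff:
  "adj (modular_product G H) (g, h) (x, y) \<longleftrightarrow>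
     g \<in> verts G \<and> h \<in> verts H \<and> x \<in> verts G \<and> y \<in> verts H \<and> (g, h) \<noteq> (x, y) \<and>
     (x \<in> closed_nbhd G g \<longleftrightarrow> y \<in> closed_nbhd H h)"
  by (auto simp: modular_product_def mem_closed_nbhd_iff)

lemma adj_modular_product_commute:
  assumes "finite_simple_graph G" and "finite_simple_graph H"
    and "adj (modular_product G H) a b"
  shows "adj (modular_product G H) b a"
  using assms(3) closed_nbhd_commute[OF assms(1)] closed_nbhd_commute[OF assms(2)]
  by (cases a; cases b) (auto simp: adj_modular_product_iff)

lemma relpowp_swap:
  fixes R :: "'a \<times> 'b \<Rightarrow> 'a \<times> 'b \<Rightarrow> bool"
  shows "((\<lambda>a b. R (prod.swap a) (prod.swap b)) ^^ n) a b = (R ^^ n) (prod.swap a) (prod.swap b)"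
proof (induction n arbitrary: b)
  case 0
  show ?case by (cases a, cases b) auto
next
  case (Suc n)
  have "((\<lambda>a b. R (prod.swap a) (prod.swap b)) ^^ Suc n) a b \<longleftrightarrow>
      (\<exists>c. (R ^^ n) (prod.swap a) (prod.swap c) \<and> R (prod.swap c) (prod.swap b))"
    by (simp add: Suc relcompp_apply)
  also have "\<dots> \<longleftrightarrow> (\<exists>d. (R ^^ n) (prod.swap a) d \<and> R d (prod.swap b))"
    by (rule iffI) (blast, metis swap_swap)
  finally show ?case by (simp add: relcompp_apply)
qed

lemma gdist_modular_product_swap:
  "gdist (modular_product H G) (h, g) (h', g') = gdist (modular_product G H) (g, h) (g', h')"
proof -
  have "adj (modular_product H G) = (\<lambda>a b. adj (modular_product G H) (prod.swap a) (prod.swap b))"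
    by (intro ext) (auto simp: adj_modular_product_iff)
  then show ?thesis by (simp add: gdist_def relpowp_swap)
qed

section \<open>Pairs at distance at least 3\<close>

text \<open>Condition (1) of the theorem; condition (2) is \<open>far_condition H G h g h' g'\<close>.\<close>

definition far_condition :: "'a sgraph \<Rightarrow> 'b sgraph \<Rightarrow> 'a \<Rightarrow> 'b \<Rightarrow> 'a \<Rightarrow> 'b \<Rightarrow> bool" where
  "far_condition G H g h g' h' \<longleftrightarrow> closed_nbhd G g = closed_nbhd G g' \<and> 3 \<le> gdist H h h'
     \<and> (closed_nbhd G g = verts G \<or> gamma_pair H h h')"

lemma far_condition_commute:
  assumes "finite_simple_graph H"
  shows "far_condition G H g h g' h' \<longleftrightarrow> far_condition G H g' h' g h"
  using gdist_commute[of H h h'] finite_simple_graphD(3)[OF assms]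
  unfolding far_condition_def gamma_pair_commute[of H h] by metis

lemma gdist_modular_product_ge_3_if_far_condition:
  assumes G: "finite_simple_graph G" and H: "finite_simple_graph H"
    and g': "g' \<in> verts G" and far: "far_condition G H g h g' h'"
  shows "3 \<le> gdist (modular_product G H) (g, h) (g', h')"
proof -
  from far have NE: "closed_nbhd G g = closed_nbhd G g'" and hh': "3 \<le> gdist H h h'"
    and univ_or_gamma: "closed_nbhd G g = verts G \<or> gamma_pair H h h'"
    by (auto simp: far_condition_def)
  have "g' \<in> closed_nbhd G g" using NE g' closed_nbhd_self by metis
  moreover have "h' \<notin> closed_nbhd H h" "h \<noteq> h'"
    using hh' closed_nbhd_self H by (fastforce simp: gdist_ge_3_iff mem_closed_nbhd_iff)+
  moreover have False
    if "adj (modular_product G H) (g, h) (x, y)" and "adj (modular_product G H) (x, y) (g', h')"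
    for x y
  proof -
    have "y \<in> closed_nbhd H h \<longleftrightarrow> y \<in> closed_nbhd H h'"
      using that NE closed_nbhd_commute[OF G] closed_nbhd_commute[OF H]
      by (auto simp: adj_modular_product_iff)
    then have "y \<notin> closed_nbhd H h \<union> closed_nbhd H h'"
      using closed_nbhd_disjoint_if_gdist_ge_3[OF H hh'] by blast
    moreover have "x \<in> verts G - closed_nbhd G g" "y \<in> verts H"
      using that calculation by (auto simp: adj_modular_product_iff)
    ultimately show False
      using univ_or_gamma by (auto simp: gamma_pair_def)
  qed
  ultimately show ?thesis
    by (auto simp: gdist_ge_3_iff adj_modular_product_iff)
qed

lemma closed_nbhd_eq_if_gdist_modular_product_ge_3:
  assumes G: "finite_simple_graph G"
    and mem: "g \<in> verts G" "h \<in> verts H" "h' \<in> verts H"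
    and far: "3 \<le> gdist (modular_product G H) (g, h) (g', h')"
    and g': "g' \<in> closed_nbhd G g"
  shows "closed_nbhd G g = closed_nbhd G g'"
proof (rule ccontr)
  let ?GH = "modular_product G H"
  have no_common: "\<not> (adj ?GH (g, h) (x, y) \<and> adj ?GH (x, y) (g', h'))" for x y
    using far by (auto simp: gdist_ge_3_iff)
  have "(g, h) \<noteq> (g', h')" and "\<not> adj ?GH (g, h) (g', h')"
    using far by (auto simp: gdist_ge_3_iff)
  then have h': "h' \<notin> closed_nbhd H h" and "h \<noteq> h'"
    using mem g' by (auto simp: adj_modular_product_iff mem_closed_nbhd_iff)
  have g: "g \<in> closed_nbhd G g'" using g' closed_nbhd_commute[OF G] by blast
  assume "closed_nbhd G g \<noteq> closed_nbhd G g'"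
  then consider x where "x \<in> closed_nbhd G g" "x \<notin> closed_nbhd G g'"
    | x where "x \<in> closed_nbhd G g'" "x \<notin> closed_nbhd G g"
    by blast
  then show False
  proof cases
    case (1 x)
    have "g' \<notin> closed_nbhd G x" using 1 closed_nbhd_commute[OF G] by blast
    then have "adj ?GH (g, h) (x, h)" and "adj ?GH (x, h) (g', h')"
      using 1 g g' h' \<open>h \<noteq> h'\<close> mem closed_nbhd_self[of h H]
      by (auto simp: adj_modular_product_iff mem_closed_nbhd_iff)
    then show False using no_common by blast
  next
    case (2 x)
    have "g' \<in> closed_nbhd G x" using 2 closed_nbhd_commute[OF G] by blast
    then have "adj ?GH (g, h) (x, h')" and "adj ?GH (x, h') (g', h')"
      using 2 g' h' \<open>h \<noteq> h'\<close> mem closed_nbhd_self[of h' H]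
      by (auto simp: adj_modular_product_iff mem_closed_nbhd_iff)
    then show False using no_common by blast
  qed
qed

lemma far_condition_if_gdist_modular_product_ge_3:
  assumes G: "finite_simple_graph G" and H: "finite_simple_graph H"
    and mem: "g \<in> verts G" "h \<in> verts H" "h' \<in> verts H"
    and far: "3 \<le> gdist (modular_product G H) (g, h) (g', h')"
    and g': "g' \<in> closed_nbhd G g"
  shows "far_condition G H g h g' h'"
proof -
  let ?GH = "modular_product G H"
  have no_common: "\<not> (adj ?GH (g, h) (x, y) \<and> adj ?GH (x, y) (g', h'))" for x y
    using far by (auto simp: gdist_ge_3_iff)
  have "(g, h) \<noteq> (g', h')" and "\<not> adj ?GH (g, h) (g', h')"
    using far by (auto simp: gdist_ge_3_iff)
  then have h': "h' \<notin> closed_nbhd H h" and "h \<noteq> h'"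
    using mem g' by (auto simp: adj_modular_product_iff mem_closed_nbhd_iff)
  have g'_vert: "g' \<in> verts G" using g' by (simp add: mem_closed_nbhd_iff)
  have NE: "closed_nbhd G g = closed_nbhd G g'"
    using closed_nbhd_eq_if_gdist_modular_product_ge_3[OF G mem far g'] .
  have hh': "3 \<le> gdist H h h'"
  proof -
    have False if "adj H h y" and "adj H y h'" for y
      using no_common[of g y] that g' h' mem closed_nbhd_self finite_simple_graphD[OF H]
      by (auto simp: adj_modular_product_iff mem_closed_nbhd_iff)
    then show ?thesis using h' mem by (auto simp: gdist_ge_3_iff mem_closed_nbhd_iff)
  qed
  have "closed_nbhd G g = verts G \<or> gamma_pair H h h'"
  proof (rule ccontr)
    assume "\<not> ?thesis"
    moreover have "closed_nbhd H h \<inter> closed_nbhd H h' = {}"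
      using closed_nbhd_disjoint_if_gdist_ge_3[OF H hh'] .
    ultimately obtain x y where "x \<in> verts G" "x \<notin> closed_nbhd G g"
      and "y \<in> verts H" "y \<notin> closed_nbhd H h" "y \<notin> closed_nbhd H h'"
      using closed_nbhd_subset[of G g] closed_nbhd_subset[of H h] closed_nbhd_subset[of H h']
        mem \<open>h \<noteq> h'\<close>
      unfolding gamma_pair_def by blast
    moreover have "g' \<notin> closed_nbhd G x" "h' \<notin> closed_nbhd H y"
      using calculation NE closed_nbhd_commute[OF G] closed_nbhd_commute[OF H] by blast+
    ultimately have "adj ?GH (g, h) (x, y)" and "adj ?GH (x, y) (g', h')"
      using mem g' g'_vert closed_nbhd_self[of g G] by (auto simp: adj_modular_product_iff)
    then show False using no_common by blast
  qed
  with NE hh' show ?thesis by (simp add: far_condition_def)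
qed

lemma gdist_modular_product_ge_3_iff:
  assumes G: "finite_simple_graph G" and H: "finite_simple_graph H"
    and mem: "g \<in> verts G" "g' \<in> verts G" "h \<in> verts H" "h' \<in> verts H"
  shows "3 \<le> gdist (modular_product G H) (g, h) (g', h') \<longleftrightarrow>
    far_condition G H g h g' h' \<or> far_condition H G h g h' g'"
proof
  assume far: "3 \<le> gdist (modular_product G H) (g, h) (g', h')"
  consider "g' \<in> closed_nbhd G g" | "h' \<in> closed_nbhd H h"
    | "g' \<notin> closed_nbhd G g" "h' \<notin> closed_nbhd H h"
    by blast
  then show "far_condition G H g h g' h' \<or> far_condition H G h g h' g'"
  proof cases
    case 1
    then show ?thesis using far_condition_if_gdist_modular_product_ge_3[OF G H mem(1,3,4) far] by blast
  next
    case 2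
    have "3 \<le> gdist (modular_product H G) (h, g) (h', g')"
      using far by (simp only: gdist_modular_product_swap[of H G])
    then show ?thesis using far_condition_if_gdist_modular_product_ge_3[OF H G mem(3,1,2) _ 2] by blast
  next
    case 3
    \<comment> \<open>then both membership tests fail, so the two vertices are adjacent\<close>
    with far mem show ?thesis by (auto simp: gdist_ge_3_iff adj_modular_product_iff)
  qed
next
  assume "far_condition G H g h g' h' \<or> far_condition H G h g h' g'"
  then show "3 \<le> gdist (modular_product G H) (g, h) (g', h')"
    using gdist_modular_product_ge_3_if_far_condition[OF G H mem(2)]
      gdist_modular_product_ge_3_if_far_condition[OF H G mem(4)]
    unfolding gdist_modular_product_swap[of H G] by blast
qed

section \<open>Pairs at distance at most 3\<close>

lemma gdist_modular_product_le_3_if_adj: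
  assumes G: "finite_simple_graph G" and H: "finite_simple_graph H"
    and mem: "g' \<in> verts G" "h' \<in> verts H"
    and adj: "adj (modular_product G H) (g, h) (x, y)"
    and "\<not> far_condition G H x y g' h'" and "\<not> far_condition H G y x h' g'"
  shows "gdist (modular_product G H) (g, h) (g', h') \<le> enat 3"
proof -
  have "x \<in> verts G" "y \<in> verts H" using adj by (simp_all add: adj_modular_product_iff)
  then have "\<not> 3 \<le> gdist (modular_product G H) (x, y) (g', h')"
    using gdist_modular_product_ge_3_iff[OF G H _ mem(1) _ mem(2)] assms(6,7) by blast
  then have "gdist (modular_product G H) (x, y) (g', h') \<le> enat 2"
    by (cases "gdist (modular_product G H) (x, y) (g', h')") (auto simp: numeral_eq_enat)
  from gdist_le_Suc_if_adj[OF adj this] show ?thesis by (simp add: numeral_eq_enat)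
qed

text \<open>The connected component of \<open>v\<close> is then the clique \<open>N[v]\<close>.\<close>

definition is_complete_component :: "'a sgraph \<Rightarrow> 'a \<Rightarrow> bool" where
  "is_complete_component G v \<longleftrightarrow> (\<forall>u \<in> closed_nbhd G v. closed_nbhd G u = closed_nbhd G v)"

lemma complete_graph_if_complete_component:
  assumes "is_complete_component G v" and "closed_nbhd G v = verts G"
  shows "complete_graph G"
  unfolding complete_graph_def
proof (intro ballI impI)
  fix x y assume "x \<in> verts G" "y \<in> verts G" "x \<noteq> y"
  with assms have "y \<in> closed_nbhd G x" by (auto simp: is_complete_component_def)
  with \<open>x \<noteq> y\<close> show "adj G x y" by (simp add: mem_closed_nbhd_iff)
qed

lemma two_complete_union_if_complete_components:
  assumes G: "finite_simple_graph G"
    and "A \<noteq> {}" "B \<noteq> {}" "A \<inter> B = {}" "A \<union> B = verts G"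
    and A: "\<And>x. x \<in> A \<Longrightarrow> closed_nbhd G x = A" and B: "\<And>x. x \<in> B \<Longrightarrow> closed_nbhd G x = B"
  shows "two_complete_union G"
  unfolding two_complete_union_def
proof (intro exI conjI ballI)
  fix x y assume "x \<in> verts G" "y \<in> verts G"
  then have "adj G x y \<longleftrightarrow> x \<noteq> y \<and> y \<in> closed_nbhd G x"
    using finite_simple_graphD(4)[OF G] by (auto simp: mem_closed_nbhd_iff)
  then show "adj G x y \<longleftrightarrow> x \<noteq> y \<and> (x \<in> A \<and> y \<in> A \<or> x \<in> B \<and> y \<in> B)"
    using A B assms(4,5) \<open>x \<in> verts G\<close> by blast
qed fact+

lemma two_complete_union_if_gamma_pair:
  assumes G: "finite_simple_graph G" and gamma: "gamma_pair G a b"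
    and "is_complete_component G a" and "is_complete_component G b"
  shows "two_complete_union G"
proof (rule two_complete_union_if_complete_components[OF G])
  show "closed_nbhd G a \<noteq> {}" "closed_nbhd G b \<noteq> {}"
    using gamma closed_nbhd_self[of a G] closed_nbhd_self[of b G] by (auto simp: gamma_pair_def)
  show "closed_nbhd G a \<inter> closed_nbhd G b = {}" "closed_nbhd G a \<union> closed_nbhd G b = verts G"
    using gamma by (simp_all add: gamma_pair_def)
  show "\<And>x. x \<in> closed_nbhd G a \<Longrightarrow> closed_nbhd G x = closed_nbhd G a"
    "\<And>x. x \<in> closed_nbhd G b \<Longrightarrow> closed_nbhd G x = closed_nbhd G b"
    using assms(3,4) unfolding is_complete_component_def by blast+
qed

lemma two_complete_union_if_complement_complete:
  assumes G: "finite_simple_graph G" and v: "v \<in> verts G"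
    and "is_complete_component G v" and "closed_nbhd G v \<noteq> verts G"
    and "\<And>u. u \<in> verts G - closed_nbhd G v \<Longrightarrow> closed_nbhd G u = verts G - closed_nbhd G v"
  shows "two_complete_union G"
proof (rule two_complete_union_if_complete_components[OF G])
  show "closed_nbhd G v \<noteq> {}" using closed_nbhd_self[OF v] by blast
  show "verts G - closed_nbhd G v \<noteq> {}"
    using assms(4) closed_nbhd_subset[of G v] by blast
  show "closed_nbhd G v \<inter> (verts G - closed_nbhd G v) = {}"
    "closed_nbhd G v \<union> (verts G - closed_nbhd G v) = verts G"
    using closed_nbhd_subset[of G v] by blast+
  show "\<And>x. x \<in> closed_nbhd G v \<Longrightarrow> closed_nbhd G x = closed_nbhd G v"
    using assms(3) unfolding is_complete_component_def by blast
qed (fact assms(5))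

lemma gdist_modular_product_le_3_if_not_complete_component:
  assumes G: "finite_simple_graph G" and H: "finite_simple_graph H"
    and mem: "g \<in> verts G" "g' \<in> verts G" "h \<in> verts H" "h' \<in> verts H"
    and far: "far_condition G H g h g' h'" and not_univ: "closed_nbhd G g \<noteq> verts G"
    and not_complete: "\<not> is_complete_component H h"
  shows "gdist (modular_product G H) (g, h) (g', h') \<le> enat 3"
proof -
  from far have NE: "closed_nbhd G g = closed_nbhd G g'" and hh': "3 \<le> gdist H h h'"
    by (simp_all add: far_condition_def)
  with far not_univ have gamma: "gamma_pair H h h'" by (simp add: far_condition_def)
  obtain d where d: "d \<in> closed_nbhd H h" "closed_nbhd H d \<noteq> closed_nbhd H h"
    using not_complete by (auto simp: is_complete_component_def)
  have "d \<in> verts H" "d \<noteq> h" using d by (auto simp: mem_closed_nbhd_iff)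
  then have step: "adj (modular_product G H) (g, h) (g, d)"
    using d mem closed_nbhd_self[of g G] by (simp add: adj_modular_product_iff)
  have "\<not> gamma_pair H d h'"
    using d(2) gamma_pair_closed_nbhd[of H d h'] gamma_pair_closed_nbhd[OF gamma] by argo
  then have "\<not> far_condition G H g d g' h'"
    using not_univ by (simp add: far_condition_def)
  moreover have "closed_nbhd H d \<noteq> closed_nbhd H h'"
    using d(1) closed_nbhd_self[OF \<open>d \<in> verts H\<close>] closed_nbhd_disjoint_if_gdist_ge_3[OF H hh']
    by blast
  then have "\<not> far_condition H G d g h' g'"
    by (simp add: far_condition_def)
  ultimately show ?thesis
    using gdist_modular_product_le_3_if_adj[OF G H mem(2,4) step] by blast
qed

lemma gdist_modular_product_le_3_if_complete_components:
  assumes G: "finite_simple_graph G" and H: "finite_simple_graph H"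
    and not_both: "\<not> two_complete_union G \<or> \<not> two_complete_union H"
    and mem: "g \<in> verts G" "g' \<in> verts G" "h \<in> verts H" "h' \<in> verts H"
    and NE: "closed_nbhd G g = closed_nbhd G g'" and not_univ: "closed_nbhd G g \<noteq> verts G"
    and gamma: "gamma_pair H h h'" and complete_g: "is_complete_component G g"
    and complete_h: "is_complete_component H h" and complete_h': "is_complete_component H h'"
  shows "gdist (modular_product G H) (g, h) (g', h') \<le> enat 3"
proof -
  have "\<not> two_complete_union G"
    using not_both two_complete_union_if_gamma_pair[OF H gamma complete_h complete_h'] by blast
  moreover have "two_complete_union G" if all: "\<forall>a \<in> verts G - closed_nbhd G g. gamma_pair G a g'"
  proof (rule two_complete_union_if_complement_complete[OF G mem(1) complete_g not_univ])
    fix a assume "a \<in> verts G - closed_nbhd G g"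
    with all have "gamma_pair G a g'" by blast
    then show "closed_nbhd G a = verts G - closed_nbhd G g"
      using NE by (simp add: gamma_pair_closed_nbhd)
  qed
  ultimately obtain a where a: "a \<in> verts G" "a \<notin> closed_nbhd G g" "\<not> gamma_pair G a g'"
    by blast
  have "h \<in> closed_nbhd H h" "h' \<in> closed_nbhd H h'"
    using closed_nbhd_self[OF mem(3)] closed_nbhd_self[OF mem(4)] .
  then have h': "h' \<notin> closed_nbhd H h" "h \<in> closed_nbhd H h" "closed_nbhd H h' \<noteq> verts H"
    using gamma by (auto simp: gamma_pair_def)
  then have step: "adj (modular_product G H) (g, h) (a, h')"
    using a mem by (auto simp: adj_modular_product_iff)
  have "\<not> far_condition G H a h' g' h'"
    by (simp add: far_condition_def gdist_ge_3_iff)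
  moreover have "\<not> far_condition H G h' a h' g'"
    using a(3) h'(3) by (simp add: far_condition_def)
  ultimately show ?thesis
    using gdist_modular_product_le_3_if_adj[OF G H mem(2,4) step] by blast
qed

lemma gdist_modular_product_le_3_if_far_condition:
  assumes G: "finite_simple_graph G" and H: "finite_simple_graph H"
    and "\<not> complete_graph G" and not_both: "\<not> two_complete_union G \<or> \<not> two_complete_union H"
    and mem: "g \<in> verts G" "g' \<in> verts G" "h \<in> verts H" "h' \<in> verts H"
    and far: "far_condition G H g h g' h'"
  shows "gdist (modular_product G H) (g, h) (g', h') \<le> enat 3"
proof (cases "is_complete_component G g")
  case False
  then obtain c where c: "c \<in> closed_nbhd G g" "closed_nbhd G c \<noteq> closed_nbhd G g"
    by (auto simp: is_complete_component_def)
  then have "c \<noteq> g" "c \<in> verts G" by (auto simp: mem_closed_nbhd_iff)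
  then have step: "adj (modular_product G H) (g, h) (c, h)"
    using c mem closed_nbhd_self[of h H] by (simp add: adj_modular_product_iff)
  have hh': "3 \<le> gdist H h h'" using far by (simp add: far_condition_def)
  have "closed_nbhd H h \<noteq> closed_nbhd H h'"
    using closed_nbhd_disjoint_if_gdist_ge_3[OF H hh'] closed_nbhd_self[OF mem(3)] by blast
  then have "\<not> far_condition G H c h g' h'" and "\<not> far_condition H G h c h' g'"
    using c(2) far by (auto simp: far_condition_def)
  then show ?thesis
    using gdist_modular_product_le_3_if_adj[OF G H mem(2,4) step] by blast
next
  case True
  with assms(3) have not_univ: "closed_nbhd G g \<noteq> verts G"
    using complete_graph_if_complete_component[OF True] by blast
  with far have NE: "closed_nbhd G g = closed_nbhd G g'" and gamma: "gamma_pair H h h'"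
    by (simp_all add: far_condition_def)
  consider "\<not> is_complete_component H h" | "\<not> is_complete_component H h'"
    | "is_complete_component H h" "is_complete_component H h'"
    by blast
  then show ?thesis
  proof cases
    case 1
    with far not_univ show ?thesis
      by (rule gdist_modular_product_le_3_if_not_complete_component[OF G H mem])
  next
    case 2
    have "far_condition G H g' h' g h"
      using far_condition_commute[OF H, THEN iffD1, OF far] .
    then have "gdist (modular_product G H) (g', h') (g, h) \<le> enat 3"
      using gdist_modular_product_le_3_if_not_complete_component[OF G H mem(2,1,4,3) _ _ 2]
        not_univ NE by simp
    moreover have "gdist (modular_product G H) (g, h) (g', h') = gdist (modular_product G H) (g', h') (g, h)"
      by (rule gdist_commute) (rule adj_modular_product_commute[OF G H])
    ultimately show ?thesis by simp
  next
    case 3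
    show ?thesis
      using gdist_modular_product_le_3_if_complete_components[OF G H not_both mem NE not_univ gamma True 3] .
  qed
qed

theorem mainTheorem4:
  fixes G :: "'a sgraph" and H :: "'b sgraph"
  assumes "finite_simple_graph G" and "finite_simple_graph H"
    and "\<not> complete_graph G" and "\<not> complete_graph H"
    and "\<not> (two_complete_union G \<and> two_complete_union H)"
    and "g \<in> verts G" and "g' \<in> verts G" and "h \<in> verts H" and "h' \<in> verts H"
  shows "gdist (modular_product G H) (g,h) (g',h') = 3 \<longleftrightarrow>
    ((closed_nbhd G g = closed_nbhd G g' \<and> gdist H h h' \<ge> 3
       \<and> (closed_nbhd G g = verts G \<or> gamma_pair H h h'))
     \<or> (closed_nbhd H h = closed_nbhd H h' \<and> gdist G g g' \<ge> 3
       \<and> (closed_nbhd H h = verts H \<or> gamma_pair G g g')))"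
proof -
  let ?d = "gdist (modular_product G H) (g, h) (g', h')"
  have not_both: "\<not> two_complete_union G \<or> \<not> two_complete_union H"
    using assms(5) by blast
  have "?d \<le> enat 3" if "far_condition G H g h g' h' \<or> far_condition H G h g h' g'"
    using that gdist_modular_product_le_3_if_far_condition[OF assms(1-3) not_both assms(6-9)]
      gdist_modular_product_le_3_if_far_condition[OF assms(2,1,4) _ assms(8,9,6,7)] not_both
      gdist_modular_product_swap[of H G h g h' g']
    by auto
  then have "?d = 3 \<longleftrightarrow> far_condition G H g h g' h' \<or> far_condition H G h g h' g'"
    using gdist_modular_product_ge_3_iff[OF assms(1,2,6-9)]
    by (metis numeral_eq_enat order_antisym order_refl)
  then show ?thesis
    unfolding far_condition_def .
qed

end
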